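(* Let $\mathcal{S}$ be finite, $\Pi$ irreducible stochastic on $\mathcal{S}$, $\kappa(x,y):=\pi_{xy}-\mathbf{1}_{x=y}$, $Q=(q(y))$ the invariant distribution, and assume detailed balance $q(y)\kappa(y,z)=q(z)\kappa(z,y)$ for all $y,z$. Let $\Phi:(0,\infty)\to\mathbb{R}$ be convex, continuously differentiable with continuous strictly positive second derivative, $\Phi(1)=0$, $\varphi:=\Phi'$. Fix $\ell:\mathcal{S}\to(0,\infty)$ with $\sum_xq(x)\ell(x)=1$. Then for every $f:\mathcal{S}\to\mathbb{R}$, $$\|f\|_{\mathbb{H}^{-1}_\Theta(\mathcal{S},\ell Q)}=\inf_{G:\mathcal{Z}\to\mathbb{R}}\Big\{\|G\|_{\mathbb{L}^2(\mathcal{Z},\vartheta_\ell C)}\;:\;f+\nabla\cdot(\vartheta_\ell G)=0\Big\}.$$ Moreover $\|f\|_{\mathbb{H}^{-1}_\Theta(\mathcal{S},\ell Q)}<\infty$ if and only if $\sum_xq(x)f(x)=0$; in that case the infimum is attained, and uniquely, by the unique discrete gradient $G=\nabla h$ ($h:\mathcal{S}\to\mathbb{R}$) satisfying the constraint.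
   Context: $\mathcal{Z}:=\{(x,y):\kappa(x,y)>0\}$, $c(x,y):=\frac12\kappa(x,y)q(x)$. Discrete gradient $\nabla f(x,y):=f(y)-f(x)$; discrete divergence of $F$: $(\nabla\cdot F)(x):=\frac12\sum_{y\neq x}\kappa(x,y)[F(x,y)-F(y,x)]$. $\Theta^\Phi(a,b):=\frac{a-b}{\varphi(a)-\varphi(b)}$ for $a\neq b$, $\Theta^\Phi(b,b):=1/\Phi''(b)$; $\vartheta_\ell(x,y):=\Theta^\Phi(\ell(x),\ell(y))$. Weighted norm $\|F\|^2_{\mathbb{L}^2(\mathcal{Z},\vartheta_\ell C)}:=\sum_{(x,y)\in\mathcal{Z}}c(x,y)\vartheta_\ell(x,y)F(x,y)^2$ (with inner product defined analogously). $\|f\|_{\mathbb{H}^1_\Theta(\mathcal{S},\ell Q)}:=\|\nabla f\|_{\mathbb{L}^2(\mathcal{Z},\vartheta_\ell C)}$, and $\|f\|_{\mathbb{H}^{-1}_\Theta(\mathcal{S},\ell Q)}:=\sup_{g:\mathcal{S}\to\mathbb{R}}\frac{\sum_xq(x)f(x)g(x)}{\|g\|_{\mathbb{H}^1_\Theta(\mathcal{S},\ell Q)}}$. *)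

theory Defs
  imports "HOL-Analysis.Analysis"
begin

fun trans_pow :: "('a::finite \<Rightarrow> 'a \<Rightarrow> real) \<Rightarrow> nat \<Rightarrow> 'a \<Rightarrow> 'a \<Rightarrow> real" where
  "trans_pow P 0 = (\<lambda>x y. if x = y then 1 else 0)"
| "trans_pow P (Suc n) = (\<lambda>x y. \<Sum>z\<in>UNIV. trans_pow P n x z * P z y)"

definition stochastic :: "('a::finite \<Rightarrow> 'a \<Rightarrow> real) \<Rightarrow> bool" where
  "stochastic P \<longleftrightarrow> (\<forall>x y. P x y \<ge> 0) \<and> (\<forall>x. (\<Sum>y\<in>UNIV. P x y) = 1)"

definition irreducible_chain :: "('a::finite \<Rightarrow> 'a \<Rightarrow> real) \<Rightarrow> bool" where
  "irreducible_chain P \<longleftrightarrow> (\<forall>x y. \<exists>n. trans_pow P n x y > 0)"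

definition invariant_distribution :: "('a::finite \<Rightarrow> 'a \<Rightarrow> real) \<Rightarrow> ('a \<Rightarrow> real) \<Rightarrow> bool" where
  "invariant_distribution P q \<longleftrightarrow> (\<forall>x. q x \<ge> 0) \<and> (\<Sum>x\<in>UNIV. q x) = 1
     \<and> (\<forall>y. (\<Sum>x\<in>UNIV. q x * P x y) = q y)"

definition kappa :: "('a \<Rightarrow> 'a \<Rightarrow> real) \<Rightarrow> 'a \<Rightarrow> 'a \<Rightarrow> real" where
  "kappa P x y = P x y - (if x = y then 1 else 0)"

definition Zset :: "('a \<Rightarrow> 'a \<Rightarrow> real) \<Rightarrow> ('a \<times> 'a) set" where
  "Zset P = {(x, y). kappa P x y > 0}"

definition cw :: "('a \<Rightarrow> 'a \<Rightarrow> real) \<Rightarrow> ('a \<Rightarrow> real) \<Rightarrow> 'a \<Rightarrow> 'a \<Rightarrow> real" where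
  "cw P q x y = 1/2 * kappa P x y * q x"

definition dgrad :: "('a \<Rightarrow> real) \<Rightarrow> 'a \<Rightarrow> 'a \<Rightarrow> real" where
  "dgrad f x y = f y - f x"

definition ddiv :: "('a::finite \<Rightarrow> 'a \<Rightarrow> real) \<Rightarrow> ('a \<Rightarrow> 'a \<Rightarrow> real) \<Rightarrow> 'a \<Rightarrow> real" where
  "ddiv P F x = 1/2 * (\<Sum>y\<in>UNIV - {x}. kappa P x y * (F x y - F y x))"

text \<open>Theta^Phi, with phi = Phi' and Phi2 = Phi''.\<close>
definition Theta :: "(real \<Rightarrow> real) \<Rightarrow> (real \<Rightarrow> real) \<Rightarrow> real \<Rightarrow> real \<Rightarrow> real" where
  "Theta \<phi> \<Phi>2 a b = (if a \<noteq> b then (a - b) / (\<phi> a - \<phi> b) else 1 / \<Phi>2 b)"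

definition vartheta :: "(real \<Rightarrow> real) \<Rightarrow> (real \<Rightarrow> real) \<Rightarrow> ('a \<Rightarrow> real) \<Rightarrow> 'a \<Rightarrow> 'a \<Rightarrow> real" where
  "vartheta \<phi> \<Phi>2 ell x y = Theta \<phi> \<Phi>2 (ell x) (ell y)"

definition L2norm :: "('a \<Rightarrow> 'a \<Rightarrow> real) \<Rightarrow> ('a \<Rightarrow> real) \<Rightarrow> (real \<Rightarrow> real) \<Rightarrow> (real \<Rightarrow> real)
    \<Rightarrow> ('a \<Rightarrow> real) \<Rightarrow> ('a \<Rightarrow> 'a \<Rightarrow> real) \<Rightarrow> real" where
  "L2norm P q \<phi> \<Phi>2 ell F =
     sqrt (\<Sum>(x, y)\<in>Zset P. cw P q x y * vartheta \<phi> \<Phi>2 ell x y * (F x y)\<^sup>2)"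

definition H1norm :: "('a \<Rightarrow> 'a \<Rightarrow> real) \<Rightarrow> ('a \<Rightarrow> real) \<Rightarrow> (real \<Rightarrow> real) \<Rightarrow> (real \<Rightarrow> real)
    \<Rightarrow> ('a \<Rightarrow> real) \<Rightarrow> ('a \<Rightarrow> real) \<Rightarrow> real" where
  "H1norm P q \<phi> \<Phi>2 ell g = L2norm P q \<phi> \<Phi>2 ell (dgrad g)"

definition equot :: "real \<Rightarrow> real \<Rightarrow> ereal" where
  "equot a b = (if b = 0 then (if a > 0 then \<infinity> else if a < 0 then -\<infinity> else 0)
                else ereal (a / b))"

definition Hm1norm :: "('a::finite \<Rightarrow> 'a \<Rightarrow> real) \<Rightarrow> ('a \<Rightarrow> real) \<Rightarrow> (real \<Rightarrow> real) \<Rightarrow> (real \<Rightarrow> real)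
    \<Rightarrow> ('a \<Rightarrow> real) \<Rightarrow> ('a \<Rightarrow> real) \<Rightarrow> ereal" where
  "Hm1norm P q \<phi> \<Phi>2 ell f =
     (SUP g\<in>(UNIV :: ('a \<Rightarrow> real) set).
        equot (\<Sum>x\<in>UNIV. q x * f x * g x) (H1norm P q \<phi> \<Phi>2 ell g))"

definition flux_constraint :: "('a::finite \<Rightarrow> 'a \<Rightarrow> real) \<Rightarrow> (real \<Rightarrow> real) \<Rightarrow> (real \<Rightarrow> real)
    \<Rightarrow> ('a \<Rightarrow> real) \<Rightarrow> ('a \<Rightarrow> real) \<Rightarrow> ('a \<Rightarrow> 'a \<Rightarrow> real) \<Rightarrow> bool" where
  "flux_constraint P \<phi> \<Phi>2 ell f G \<longleftrightarrow>
     (\<forall>x. f x + ddiv P (\<lambda>u v. vartheta \<phi> \<Phi>2 ell u v * G u v) x = 0)"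

end

theory Submission
  imports Defs
begin

(* By detailed balance, summation by parts turns the constraint f + div (th G) = 0 into its weak form
   sum_x q x f x g x = <G, grad g> for all g, where <_, _> is the inner product of L^2(Z, th C) and
   th = vartheta_l is positive because phi is strictly increasing. Testing with g = 1 shows that
   admissible G exist only if f has Q-mean zero. Conversely, irreducibility makes the constants the
   kernel of grad, so h |-> <h>_Q - div (th grad h) is injective, hence onto, and yields an admissible
   gradient grad h whenever f has Q-mean zero.
   For admissible G the difference G - grad h is orthogonal to all gradients, so
   |G|^2 = |grad h|^2 + |G - grad h|^2 and grad h is the unique minimiser. By Cauchy-Schwarz,
   sum_x q x f x g x = <grad h, grad g> <= |grad h| |g|_H1 with equality for g = h, so the dual norm
   of f is |grad h|. If f has nonzero mean, the constants (of H1-seminorm 0) make the dual norm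
   infinite, which is also the infimum over the empty set of admissible G. *)

lemma Theta_commute: "Theta \<phi> \<Phi>2 a b = Theta \<phi> \<Phi>2 b a"
  by (cases "a = b") (simp_all add: Theta_def minus_divide_divide[symmetric, of "a - b"])

lemma Theta_pos:
  assumes mono: "strict_mono_on {0<..} \<phi>" and pos: "\<Phi>2 b > 0" and "a > 0" "b > 0"
  shows "Theta \<phi> \<Phi>2 a b > 0"
proof -
  consider "a < b" | "a = b" | "b < a"
    by linarith
  then show ?thesis
  proof cases
    case 1
    with mono \<open>a > 0\<close> \<open>b > 0\<close> have "\<phi> a < \<phi> b"
      by (simp add: strict_mono_onD)
    with 1 show ?thesis
      by (simp add: Theta_def divide_neg_neg)
  next
    case 2
    with pos show ?thesis
      by (simp add: Theta_def)
  next
    case 3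
    with mono \<open>a > 0\<close> \<open>b > 0\<close> have "\<phi> b < \<phi> a"
      by (simp add: strict_mono_onD)
    with 3 show ?thesis
      by (simp add: Theta_def)
  qed
qed

lemma strict_mono_on_pos_deriv:
  assumes "\<And>x. x > 0 \<Longrightarrow> (\<phi> has_real_derivative \<phi>' x) (at x)" and "\<And>x. x > 0 \<Longrightarrow> \<phi>' x > 0"
  shows "strict_mono_on {0<..} \<phi>"
proof (rule strict_mono_onI)
  fix a b :: real
  assume "a \<in> {0<..}" and "a < b"
  show "\<phi> a < \<phi> b"
  proof (rule DERIV_pos_imp_increasing[OF \<open>a < b\<close>])
    fix x
    assume "a \<le> x"
    with \<open>a \<in> {0<..}\<close> have "x > 0"
      by simp
    with assms show "\<exists>y. (\<phi> has_real_derivative y) (at x) \<and> y > 0"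
      by blast
  qed
qed

lemma dgrad_const: "dgrad (\<lambda>_. c) = (\<lambda>_ _. 0)"
  by (simp add: dgrad_def fun_eq_iff)

lemma dgrad_add: "dgrad (\<lambda>x. u x + v x) = (\<lambda>x y. dgrad u x y + dgrad v x y)"
  by (simp add: dgrad_def fun_eq_iff)

lemma dgrad_scale: "dgrad (\<lambda>x. c * u x) = (\<lambda>x y. c * dgrad u x y)"
  by (simp add: dgrad_def fun_eq_iff algebra_simps)

lemma ddiv_add: "ddiv P (\<lambda>x y. F x y + G x y) z = ddiv P F z + ddiv P G z"
  unfolding ddiv_def by (simp add: ring_distribs sum.distrib sum_subtractf)

lemma ddiv_scale: "ddiv P (\<lambda>x y. c * F x y) z = c * ddiv P F z"
  by (simp add: ddiv_def algebra_simps sum_distrib_left)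

lemma linear_fun_inj_imp_surj:
  fixes L :: "('a::finite \<Rightarrow> real) \<Rightarrow> 'a \<Rightarrow> real"
  assumes add: "\<And>u v. L (\<lambda>x. u x + v x) = (\<lambda>x. L u x + L v x)"
    and scale: "\<And>c u. L (\<lambda>x. c * u x) = (\<lambda>x. c * L u x)"
    and kernel: "\<And>u. L u = (\<lambda>_. 0) \<Longrightarrow> u = (\<lambda>_. 0)"
  shows "\<exists>u. L u = f"
proof -
  define T :: "real^'a \<Rightarrow> real^'a" where "T v = (\<chi> x. L (vec_nth v) x)" for v
  have "vec_nth (v + w) = (\<lambda>x. v $ x + w $ x)" "vec_nth (c *\<^sub>R v) = (\<lambda>x. c * v $ x)"
    for v w :: "real^'a" and c
    by auto
  then have lin: "linear T"
    by (intro linearI) (simp_all add: T_def vec_eq_iff add scale)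
  have "inj T"
    unfolding linear_injective_0[OF lin]
    using kernel by (simp add: T_def vec_eq_iff fun_eq_iff)
  then obtain v where "T v = (\<chi> x. f x)"
    using linear_inj_imp_surj[OF lin] by (metis surjD)
  then have "L (vec_nth v) = f"
    by (simp add: T_def vec_eq_iff fun_eq_iff)
  then show ?thesis
    by blast
qed

lemma equot_le_ereal:
  assumes "0 \<le> b" and "0 \<le> N" and "a \<le> N * b"
  shows "equot a b \<le> ereal N"
proof (cases "b = 0")
  case True
  with assms show ?thesis
    by (auto simp: equot_def)
next
  case False
  with assms have "a / b \<le> N"
    by (simp add: divide_le_eq mult.commute)
  with False show ?thesis
    by (simp add: equot_def)
qed

lemma equot_square: "0 \<le> N \<Longrightarrow> equot (N\<^sup>2) N = ereal N"
  by (simp add: equot_def power2_eq_square)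

locale reversible_chain =
  fixes P :: "'a::finite \<Rightarrow> 'a \<Rightarrow> real" and q :: "'a \<Rightarrow> real"
  assumes stochastic: "stochastic P"
    and irreducible: "irreducible_chain P"
    and invariant: "invariant_distribution P q"
    and detailed_balance: "\<And>y z. q y * kappa P y z = q z * kappa P z y"
begin

lemma P_nonneg: "P x y \<ge> 0"
  using stochastic by (simp add: stochastic_def)

lemma q_nonneg: "q x \<ge> 0"
  using invariant by (simp add: invariant_distribution_def)

lemma sum_q: "(\<Sum>x\<in>UNIV. q x) = 1"
  using invariant by (simp add: invariant_distribution_def)

lemma Zset_iff: "(x, y) \<in> Zset P \<longleftrightarrow> x \<noteq> y \<and> P x y > 0"
proof -
  have "P x x \<le> (\<Sum>y\<in>UNIV. P x y)"
    by (rule member_le_sum) (auto simp: P_nonneg)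
  also have "\<dots> = 1"
    using stochastic by (simp add: stochastic_def)
  finally show ?thesis
    by (auto simp: Zset_def kappa_def)
qed

lemma kappa_eq_0_off_Zset: "x \<noteq> y \<Longrightarrow> (x, y) \<notin> Zset P \<Longrightarrow> kappa P x y = 0"
  using P_nonneg[of x y] by (auto simp: Zset_iff kappa_def)

lemma trans_pow_Suc_pos_imp:
  assumes "trans_pow P (Suc n) x y > 0"
  obtains w where "trans_pow P n x w > 0" and "P w y > 0"
proof -
  have "\<exists>w. trans_pow P n x w * P w y > 0"
  proof (rule ccontr)
    assume "\<nexists>w. trans_pow P n x w * P w y > 0"
    then have "(\<Sum>w\<in>UNIV. trans_pow P n x w * P w y) \<le> 0"
      by (simp add: sum_nonpos not_less)
    with assms show False
      by simp
  qed
  then obtain w where "trans_pow P n x w * P w y > 0"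
    by blast
  with P_nonneg[of w y] that show ?thesis
    by (auto simp: zero_less_mult_iff)
qed

lemma Zset_induct [consumes 1, case_names step]:
  assumes "S x" and step: "\<And>u v. (u, v) \<in> Zset P \<Longrightarrow> S u \<Longrightarrow> S v"
  shows "S y"
proof -
  have "S z" if "trans_pow P n x z > 0" for n z
    using that
  proof (induction n arbitrary: z)
    case 0
    with \<open>S x\<close> show ?case
      by (simp split: if_splits)
  next
    case (Suc n)
    then obtain w where "trans_pow P n x w > 0" and "P w z > 0"
      by (blast elim: trans_pow_Suc_pos_imp)
    with Suc.IH step show ?case
      by (cases "w = z") (auto simp: Zset_iff)
  qed
  moreover obtain n where "trans_pow P n x y > 0"
    using irreducible by (auto simp: irreducible_chain_def)
  ultimately show ?thesis .
qed

lemma q_pos: "q x > 0"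
proof -
  obtain x0 where "q x0 \<noteq> 0"
    using sum_q by (metis sum.neutral zero_neq_one)
  with q_nonneg have "q x0 > 0"
    by (simp add: order_le_neq_trans)
  then show ?thesis
  proof (induction rule: Zset_induct)
    case (step u v)
    then have "q v * kappa P v u > 0"
      by (simp add: Zset_def flip: detailed_balance)
    with q_nonneg[of v] show ?case
      by (simp add: zero_less_mult_iff)
  qed
qed

lemma Zset_sym:
  assumes "(x, y) \<in> Zset P"
  shows "(y, x) \<in> Zset P"
proof -
  have "q y * kappa P y x > 0"
    using assms q_pos[of x] by (simp add: Zset_def flip: detailed_balance)
  with q_pos[of y] show ?thesis
    by (simp add: Zset_def zero_less_mult_iff)
qed

lemma cw_commute: "cw P q x y = cw P q y x"
  using detailed_balance[of x y] by (simp add: cw_def mult.commute)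

lemma cw_pos: "(x, y) \<in> Zset P \<Longrightarrow> cw P q x y > 0"
  using q_pos[of x] by (simp add: cw_def Zset_def)

lemma dgrad_eq_0_imp_constant:
  assumes "\<forall>(x, y)\<in>Zset P. dgrad h x y = 0"
  shows "h y = h x"
  using refl[of "h x"]
proof (induction rule: Zset_induct)
  case (step u v)
  with assms show ?case
    by (auto simp: dgrad_def)
qed

lemma sum_offdiag_eq_sum_Zset:
  "(\<Sum>x\<in>UNIV. \<Sum>y\<in>UNIV - {x}. kappa P x y * H x y) = (\<Sum>(x, y)\<in>Zset P. kappa P x y * H x y)"
proof -
  have "(\<Sum>x\<in>UNIV. \<Sum>y\<in>UNIV - {x}. kappa P x y * H x y)
      = (\<Sum>(x, y)\<in>(SIGMA x:UNIV. UNIV - {x}). kappa P x y * H x y)"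
    by (rule sum.Sigma) auto
  also have "\<dots> = (\<Sum>(x, y)\<in>Zset P. kappa P x y * H x y)"
  proof (rule sum.mono_neutral_right)
    show "Zset P \<subseteq> (SIGMA x:UNIV. UNIV - {x})"
      by (auto simp: Zset_iff)
    show "\<forall>i\<in>(SIGMA x:UNIV. UNIV - {x}) - Zset P. (case i of (x, y) \<Rightarrow> kappa P x y * H x y) = 0"
    proof
      fix i
      assume "i \<in> (SIGMA x:UNIV. UNIV - {x}) - Zset P"
      then obtain x y where "i = (x, y)" "x \<noteq> y" "(x, y) \<notin> Zset P"
        by auto
      then show "(case i of (x, y) \<Rightarrow> kappa P x y * H x y) = 0"
        by (simp add: kappa_eq_0_off_Zset)
    qed
  qed simp
  finally show ?thesis .
qed

lemma sum_Zset_swap: "(\<Sum>(x, y)\<in>Zset P. F y x) = (\<Sum>(x, y)\<in>Zset P. F x y)"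
  by (rule sum.reindex_bij_witness[of _ prod.swap prod.swap]) (auto intro: Zset_sym)

end

locale weighted_reversible_chain = reversible_chain P q
  for P :: "'a::finite \<Rightarrow> 'a \<Rightarrow> real" and q +
  fixes th :: "'a \<Rightarrow> 'a \<Rightarrow> real"
  assumes th_pos: "th x y > 0"
    and th_commute: "th x y = th y x"
begin

definition energy :: "('a \<Rightarrow> 'a \<Rightarrow> real) \<Rightarrow> ('a \<Rightarrow> 'a \<Rightarrow> real) \<Rightarrow> real" where
  "energy F G = (\<Sum>(x, y)\<in>Zset P. cw P q x y * th x y * (F x y * G x y))"

lemma weight_pos: "(x, y) \<in> Zset P \<Longrightarrow> cw P q x y * th x y > 0"
  using cw_pos th_pos by simp

lemma energy_commute: "energy F G = energy G F"
  by (simp add: energy_def mult_ac)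

lemma energy_nonneg: "energy F F \<ge> 0"
  unfolding energy_def
  by (intro sum_nonneg) (auto intro: mult_nonneg_nonneg less_imp_le[OF weight_pos])

lemma energy_eq_0_iff: "energy F F = 0 \<longleftrightarrow> (\<forall>(x, y)\<in>Zset P. F x y = 0)"
proof -
  have term_eq_0: "cw P q x y * th x y * (F x y * F x y) = 0 \<longleftrightarrow> F x y = 0"
    if "(x, y) \<in> Zset P" for x y
    using cw_pos[OF that] th_pos[of x y] by simp
  have "energy F F = 0 \<longleftrightarrow>
      (\<forall>p\<in>Zset P. (case p of (x, y) \<Rightarrow> cw P q x y * th x y * (F x y * F x y)) = 0)"
    unfolding energy_def
    by (rule sum_nonneg_eq_0_iff) (auto intro: mult_nonneg_nonneg less_imp_le[OF weight_pos])
  also have "\<dots> \<longleftrightarrow> (\<forall>(x, y)\<in>Zset P. F x y = 0)"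
    using term_eq_0 by fastforce
  finally show ?thesis .
qed

lemma energy_Cauchy_Schwarz: "energy F G \<le> sqrt (energy F F) * sqrt (energy G G)"
proof -
  define a where "a F = (\<lambda>(x, y). sqrt (cw P q x y * th x y) * F x y)" for F :: "'a \<Rightarrow> 'a \<Rightarrow> real"
  have "a F (x, y) * a G (x, y) = cw P q x y * th x y * (F x y * G x y)"
    if "(x, y) \<in> Zset P" for F G x y
  proof -
    have "a F (x, y) * a G (x, y) = (sqrt (cw P q x y * th x y))\<^sup>2 * (F x y * G x y)"
      by (simp add: a_def power2_eq_square mult_ac)
    with weight_pos[OF that] show ?thesis
      by simp
  qed
  then have energy_as_sum: "energy F G = (\<Sum>p\<in>Zset P. a F p * a G p)" for F G
    unfolding energy_def by (intro sum.cong) auto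
  have "(energy F G)\<^sup>2 \<le> energy F F * energy G G"
    using Cauchy_Schwarz_ineq_sum[of "a F" "a G" "Zset P"] by (simp add: energy_as_sum power2_eq_square)
  then show ?thesis
    by (simp add: real_le_rsqrt flip: real_sqrt_mult)
qed

lemma energy_diff_left: "energy (\<lambda>x y. F x y - G x y) H = energy F H - energy G H"
  by (simp add: energy_def split_def algebra_simps sum_subtractf)

lemma energy_add_self:
  "energy (\<lambda>x y. F x y + G x y) (\<lambda>x y. F x y + G x y) = energy F F + 2 * energy F G + energy G G"
  by (simp add: energy_def split_def algebra_simps sum.distrib sum_distrib_left)

lemma energy_dgrad_const: "energy F (dgrad (\<lambda>_. c)) = 0"
  by (simp add: energy_def dgrad_const)

lemma summation_by_parts:
  "(\<Sum>x\<in>UNIV. q x * g x * ddiv P (\<lambda>u v. th u v * G u v) x) = - energy G (dgrad g)"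
proof -
  have "(\<Sum>x\<in>UNIV. q x * g x * ddiv P (\<lambda>u v. th u v * G u v) x)
      = (\<Sum>x\<in>UNIV. \<Sum>y\<in>UNIV - {x}. kappa P x y * (q x * g x * (th x y * G x y - th y x * G y x) / 2))"
    by (simp add: ddiv_def sum_distrib_left sum_divide_distrib mult_ac)
  also have "\<dots> = (\<Sum>(x, y)\<in>Zset P. kappa P x y * (q x * g x * (th x y * G x y - th y x * G y x) / 2))"
    by (rule sum_offdiag_eq_sum_Zset)
  also have "\<dots> = (\<Sum>(x, y)\<in>Zset P. cw P q x y * th x y * G x y * g x - cw P q x y * th x y * G y x * g x)"
    by (intro sum.cong) (auto simp: cw_def th_commute field_simps)
  also have "\<dots> = (\<Sum>(x, y)\<in>Zset P. cw P q x y * th x y * G x y * g x)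
      - (\<Sum>(x, y)\<in>Zset P. cw P q x y * th x y * G y x * g x)"
    by (simp add: split_def sum_subtractf)
  also have "(\<Sum>(x, y)\<in>Zset P. cw P q x y * th x y * G y x * g x)
      = (\<Sum>(x, y)\<in>Zset P. cw P q x y * th x y * G x y * g y)"
    using sum_Zset_swap[of "\<lambda>x y. cw P q x y * th x y * G x y * g y"]
    by (simp add: cw_commute th_commute)
  also have "(\<Sum>(x, y)\<in>Zset P. cw P q x y * th x y * G x y * g x)
      - (\<Sum>(x, y)\<in>Zset P. cw P q x y * th x y * G x y * g y) = - energy G (dgrad g)"
    by (simp add: energy_def dgrad_def split_def algebra_simps sum_subtractf)
  finally show ?thesis .
qed

lemma divergence_eq_iff_weak:
  "(\<forall>x. f x + ddiv P (\<lambda>u v. th u v * G u v) x = 0)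
    \<longleftrightarrow> (\<forall>g. (\<Sum>x\<in>UNIV. q x * f x * g x) = energy G (dgrad g))"
proof
  assume eq: "\<forall>x. f x + ddiv P (\<lambda>u v. th u v * G u v) x = 0"
  show "\<forall>g. (\<Sum>x\<in>UNIV. q x * f x * g x) = energy G (dgrad g)"
  proof
    fix g
    have "f x = - ddiv P (\<lambda>u v. th u v * G u v) x" for x
      using eq by (simp add: eq_neg_iff_add_eq_0)
    then have "(\<Sum>x\<in>UNIV. q x * f x * g x) = - (\<Sum>x\<in>UNIV. q x * g x * ddiv P (\<lambda>u v. th u v * G u v) x)"
      by (simp add: sum_negf[symmetric] mult_ac)
    then show "(\<Sum>x\<in>UNIV. q x * f x * g x) = energy G (dgrad g)"
      by (simp add: summation_by_parts)
  qed
next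
  assume weak: "\<forall>g. (\<Sum>x\<in>UNIV. q x * f x * g x) = energy G (dgrad g)"
  show "\<forall>x. f x + ddiv P (\<lambda>u v. th u v * G u v) x = 0"
  proof
    fix z
    define D where "D x = ddiv P (\<lambda>u v. th u v * G u v) x" for x
    define g :: "'a \<Rightarrow> real" where "g x = (if x = z then 1 else 0)" for x
    have "(\<Sum>x\<in>UNIV. a x * g x) = (\<Sum>x\<in>UNIV. if x = z then a x else 0)" for a :: "'a \<Rightarrow> real"
      by (intro sum.cong) (simp_all add: g_def)
    then have sum_g: "(\<Sum>x\<in>UNIV. a x * g x) = a z" for a
      by simp
    have "q z * f z = (\<Sum>x\<in>UNIV. q x * f x * g x)"
      using sum_g[of "\<lambda>x. q x * f x"] by simp
    also have "\<dots> = energy G (dgrad g)"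
      using weak by blast
    also have "\<dots> = - (\<Sum>x\<in>UNIV. q x * g x * D x)"
      by (simp add: D_def summation_by_parts)
    also have "(\<Sum>x\<in>UNIV. q x * g x * D x) = q z * D z"
      using sum_g[of "\<lambda>x. q x * D x"] by (simp add: mult_ac)
    finally have "q z * (f z + D z) = 0"
      by (simp add: algebra_simps)
    with q_pos[of z] show "f z + ddiv P (\<lambda>u v. th u v * G u v) z = 0"
      by (simp add: D_def)
  qed
qed

(* Adding the Q-mean removes the kernel of h |-> - div (th grad h), which consists of the constants. *)
definition shifted_laplacian :: "('a \<Rightarrow> real) \<Rightarrow> 'a \<Rightarrow> real" where
  "shifted_laplacian h x = (\<Sum>y\<in>UNIV. q y * h y) - ddiv P (\<lambda>u v. th u v * dgrad h u v) x"

lemma shifted_laplacian_pairing: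
  "(\<Sum>x\<in>UNIV. q x * g x * shifted_laplacian h x)
    = energy (dgrad h) (dgrad g) + (\<Sum>x\<in>UNIV. q x * g x) * (\<Sum>x\<in>UNIV. q x * h x)"
  using summation_by_parts[of g "dgrad h"]
  by (simp add: shifted_laplacian_def right_diff_distrib sum_subtractf sum_distrib_right)

lemma shifted_laplacian_eq_0_imp_eq_0:
  assumes "shifted_laplacian h = (\<lambda>_. 0)"
  shows "h = (\<lambda>_. 0)"
proof
  fix x
  have "energy (dgrad h) (dgrad h) + (\<Sum>y\<in>UNIV. q y * h y)\<^sup>2 = 0"
    using shifted_laplacian_pairing[of h h] assms by (simp add: power2_eq_square)
  with energy_nonneg[of "dgrad h"]
  have "energy (dgrad h) (dgrad h) = 0" and mean: "(\<Sum>y\<in>UNIV. q y * h y) = 0"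
    by (simp_all add: add_nonneg_eq_0_iff)
  then have const: "h = (\<lambda>_. h x)"
    by (intro ext dgrad_eq_0_imp_constant) (simp add: energy_eq_0_iff)
  have "(\<Sum>y\<in>UNIV. q y * h y) = h x"
    by (subst const) (simp add: sum_q flip: sum_distrib_right)
  with mean show "h x = 0"
    by simp
qed

lemma exists_gradient_solution:
  assumes "(\<Sum>x\<in>UNIV. q x * f x) = 0"
  obtains h where "\<forall>x. f x + ddiv P (\<lambda>u v. th u v * dgrad h u v) x = 0"
proof -
  have "\<exists>h. shifted_laplacian h = f"
  proof (rule linear_fun_inj_imp_surj)
    show "shifted_laplacian (\<lambda>x. u x + v x) = (\<lambda>x. shifted_laplacian u x + shifted_laplacian v x)" for u v
      by (simp add: shifted_laplacian_def dgrad_add ring_distribs ddiv_add sum.distrib fun_eq_iff)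
    show "shifted_laplacian (\<lambda>x. c * u x) = (\<lambda>x. c * shifted_laplacian u x)" for c u
      by (simp add: shifted_laplacian_def dgrad_scale ddiv_scale mult.left_commute right_diff_distrib
          sum_distrib_left fun_eq_iff)
  qed (rule shifted_laplacian_eq_0_imp_eq_0)
  then obtain h where h: "shifted_laplacian h = f" ..
  have "(\<Sum>x\<in>UNIV. q x * h x) = 0"
    using shifted_laplacian_pairing[of "\<lambda>_. 1" h] assms by (simp add: h energy_dgrad_const sum_q)
  with h show thesis
    by (intro that) (auto simp: shifted_laplacian_def)
qed

end

locale Theta_weighted_chain = reversible_chain P q
  for P :: "'a::finite \<Rightarrow> 'a \<Rightarrow> real" and q +
  fixes \<phi> \<Phi>2 :: "real \<Rightarrow> real" and ell :: "'a \<Rightarrow> real"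
  assumes dphi: "\<And>x. x > 0 \<Longrightarrow> (\<phi> has_real_derivative \<Phi>2 x) (at x)"
    and Phi2_pos: "\<And>x. x > 0 \<Longrightarrow> \<Phi>2 x > 0"
    and ell_pos: "\<And>x. ell x > 0"
begin

sublocale weighted_reversible_chain P q "vartheta \<phi> \<Phi>2 ell"
proof
  show "vartheta \<phi> \<Phi>2 ell x y > 0" for x y
    unfolding vartheta_def
    by (intro Theta_pos strict_mono_on_pos_deriv[OF dphi Phi2_pos] Phi2_pos ell_pos)
  show "vartheta \<phi> \<Phi>2 ell x y = vartheta \<phi> \<Phi>2 ell y x" for x y
    unfolding vartheta_def by (rule Theta_commute)
qed

lemma L2norm_eq_sqrt_energy: "L2norm P q \<phi> \<Phi>2 ell F = sqrt (energy F F)"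
  by (simp add: L2norm_def energy_def power2_eq_square)

lemma H1norm_eq_sqrt_energy: "H1norm P q \<phi> \<Phi>2 ell g = sqrt (energy (dgrad g) (dgrad g))"
  by (simp add: H1norm_def L2norm_eq_sqrt_energy)

lemma flux_constraint_iff_weak:
  "flux_constraint P \<phi> \<Phi>2 ell f G \<longleftrightarrow> (\<forall>g. (\<Sum>x\<in>UNIV. q x * f x * g x) = energy G (dgrad g))"
  unfolding flux_constraint_def by (rule divergence_eq_iff_weak)

lemma flux_constraint_imp_mean_0:
  "flux_constraint P \<phi> \<Phi>2 ell f G \<Longrightarrow> (\<Sum>x\<in>UNIV. q x * f x) = 0"
  unfolding flux_constraint_iff_weak by (drule spec[of _ "\<lambda>_. 1"]) (simp add: energy_dgrad_const)

lemma exists_gradient_flux: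
  assumes "(\<Sum>x\<in>UNIV. q x * f x) = 0"
  obtains h where "flux_constraint P \<phi> \<Phi>2 ell f (dgrad h)"
  using exists_gradient_solution[OF assms] by (auto simp: flux_constraint_def)

lemma flux_constraint_Pythagoras:
  assumes "flux_constraint P \<phi> \<Phi>2 ell f (dgrad h)" and "flux_constraint P \<phi> \<Phi>2 ell f G"
  shows "energy G G = energy (dgrad h) (dgrad h)
    + energy (\<lambda>x y. G x y - dgrad h x y) (\<lambda>x y. G x y - dgrad h x y)"
proof -
  define D where "D = (\<lambda>x y. G x y - dgrad h x y)"
  have "energy D (dgrad h) = 0"
    using assms by (simp add: D_def energy_diff_left flux_constraint_iff_weak)
  moreover have "G = (\<lambda>x y. dgrad h x y + D x y)"
    by (simp add: D_def)
  ultimately show ?thesis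
    using energy_add_self[of "dgrad h" D] by (simp add: energy_commute flip: D_def)
qed

lemma L2norm_gradient_le:
  assumes "flux_constraint P \<phi> \<Phi>2 ell f (dgrad h)" and "flux_constraint P \<phi> \<Phi>2 ell f G"
  shows "L2norm P q \<phi> \<Phi>2 ell (dgrad h) \<le> L2norm P q \<phi> \<Phi>2 ell G"
  using flux_constraint_Pythagoras[OF assms] energy_nonneg by (simp add: L2norm_eq_sqrt_energy)

lemma flux_minimizer_unique:
  assumes "flux_constraint P \<phi> \<Phi>2 ell f (dgrad h)" and "flux_constraint P \<phi> \<Phi>2 ell f G"
    and "L2norm P q \<phi> \<Phi>2 ell G = L2norm P q \<phi> \<Phi>2 ell (dgrad h)"
  shows "\<forall>(x, y)\<in>Zset P. G x y = dgrad h x y"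
proof -
  have "energy (\<lambda>x y. G x y - dgrad h x y) (\<lambda>x y. G x y - dgrad h x y) = 0"
    using flux_constraint_Pythagoras[OF assms(1,2)] assms(3) by (simp add: L2norm_eq_sqrt_energy)
  then show ?thesis
    by (simp add: energy_eq_0_iff)
qed

lemma flux_gradient_unique:
  assumes "flux_constraint P \<phi> \<Phi>2 ell f (dgrad h)" and "flux_constraint P \<phi> \<Phi>2 ell f (dgrad h')"
  shows "\<forall>(x, y)\<in>Zset P. dgrad h' x y = dgrad h x y"
  using assms by (intro flux_minimizer_unique antisym L2norm_gradient_le)

lemma INF_flux_L2norm:
  assumes "flux_constraint P \<phi> \<Phi>2 ell f (dgrad h)"
  shows "(INF G\<in>{G. flux_constraint P \<phi> \<Phi>2 ell f G}. ereal (L2norm P q \<phi> \<Phi>2 ell G))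
    = ereal (L2norm P q \<phi> \<Phi>2 ell (dgrad h))"
  using assms L2norm_gradient_le[OF assms] by (intro antisym INF_lower INF_greatest) auto

lemma equot_le_Hm1norm:
  "equot (\<Sum>x\<in>UNIV. q x * f x * g x) (H1norm P q \<phi> \<Phi>2 ell g) \<le> Hm1norm P q \<phi> \<Phi>2 ell f"
  unfolding Hm1norm_def by (rule SUP_upper) simp

lemma Hm1norm_eq_L2norm_gradient:
  assumes flux: "flux_constraint P \<phi> \<Phi>2 ell f (dgrad h)"
  shows "Hm1norm P q \<phi> \<Phi>2 ell f = ereal (L2norm P q \<phi> \<Phi>2 ell (dgrad h))"
proof (rule antisym)
  have pairing: "(\<Sum>x\<in>UNIV. q x * f x * g x) = energy (dgrad h) (dgrad g)" for g
    using flux by (simp add: flux_constraint_iff_weak)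
  show "Hm1norm P q \<phi> \<Phi>2 ell f \<le> ereal (L2norm P q \<phi> \<Phi>2 ell (dgrad h))"
    unfolding Hm1norm_def
  proof (rule SUP_least)
    fix g :: "'a \<Rightarrow> real"
    have "(\<Sum>x\<in>UNIV. q x * f x * g x) \<le> L2norm P q \<phi> \<Phi>2 ell (dgrad h) * H1norm P q \<phi> \<Phi>2 ell g"
      unfolding pairing L2norm_eq_sqrt_energy H1norm_eq_sqrt_energy by (rule energy_Cauchy_Schwarz)
    then show "equot (\<Sum>x\<in>UNIV. q x * f x * g x) (H1norm P q \<phi> \<Phi>2 ell g)
        \<le> ereal (L2norm P q \<phi> \<Phi>2 ell (dgrad h))"
      by (intro equot_le_ereal) (simp_all add: H1norm_eq_sqrt_energy L2norm_eq_sqrt_energy energy_nonneg)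
  qed
  define N where "N = L2norm P q \<phi> \<Phi>2 ell (dgrad h)"
  have "N \<ge> 0" and "H1norm P q \<phi> \<Phi>2 ell h = N"
    by (simp_all add: N_def H1norm_def L2norm_eq_sqrt_energy energy_nonneg)
  moreover have "(\<Sum>x\<in>UNIV. q x * f x * h x) = N\<^sup>2"
    by (simp add: pairing N_def L2norm_eq_sqrt_energy energy_nonneg)
  ultimately have "equot (\<Sum>x\<in>UNIV. q x * f x * h x) (H1norm P q \<phi> \<Phi>2 ell h) = ereal N"
    by (simp add: equot_square)
  with equot_le_Hm1norm[of f h] show "ereal N \<le> Hm1norm P q \<phi> \<Phi>2 ell f"
    by simp
qed

lemma Hm1norm_eq_infinity:
  assumes "(\<Sum>x\<in>UNIV. q x * f x) \<noteq> 0"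
  shows "Hm1norm P q \<phi> \<Phi>2 ell f = \<infinity>"
proof -
  let ?c = "\<Sum>x\<in>UNIV. q x * f x"
  have "(\<Sum>x\<in>UNIV. q x * f x * ?c) > 0"
    using assms by (simp flip: sum_distrib_right power2_eq_square)
  moreover have "H1norm P q \<phi> \<Phi>2 ell (\<lambda>_. ?c) = 0"
    by (simp add: H1norm_eq_sqrt_energy energy_dgrad_const)
  ultimately have "equot (\<Sum>x\<in>UNIV. q x * f x * ?c) (H1norm P q \<phi> \<Phi>2 ell (\<lambda>_. ?c)) = \<infinity>"
    by (simp add: equot_def)
  with equot_le_Hm1norm[of f "\<lambda>_. ?c"] show ?thesis
    by (simp add: top_unique flip: top_ereal_def)
qed

end

theorem proposition8p3:
  fixes P :: "'a::finite \<Rightarrow> 'a \<Rightarrow> real"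
    and q :: "'a \<Rightarrow> real"
    and \<Phi> \<phi> \<Phi>2 :: "real \<Rightarrow> real"
    and ell f :: "'a \<Rightarrow> real"
  assumes stoch: "stochastic P"
    and irred: "irreducible_chain P"
    and inv: "invariant_distribution P q"
    and detbal: "\<And>y z. q y * kappa P y z = q z * kappa P z y"
    and convex: "convex_on {0<..} \<Phi>"
    and dPhi: "\<And>x. x > 0 \<Longrightarrow> (\<Phi> has_real_derivative \<phi> x) (at x)"
    and cont_phi: "continuous_on {0<..} \<phi>"
    and dphi: "\<And>x. x > 0 \<Longrightarrow> (\<phi> has_real_derivative \<Phi>2 x) (at x)"
    and cont_Phi2: "continuous_on {0<..} \<Phi>2"
    and pos_Phi2: "\<And>x. x > 0 \<Longrightarrow> \<Phi>2 x > 0"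
    and Phi1: "\<Phi> 1 = 0"
    and ell_pos: "\<And>x. ell x > 0"
    and ell_norm: "(\<Sum>x\<in>UNIV. q x * ell x) = 1"
  shows "(Hm1norm P q \<phi> \<Phi>2 ell f =
           (INF G\<in>{G. flux_constraint P \<phi> \<Phi>2 ell f G}. ereal (L2norm P q \<phi> \<Phi>2 ell G)))
    \<and> (Hm1norm P q \<phi> \<Phi>2 ell f < \<infinity> \<longleftrightarrow> (\<Sum>x\<in>UNIV. q x * f x) = 0)
    \<and> ((\<Sum>x\<in>UNIV. q x * f x) = 0 \<longrightarrow>
           (\<exists>h. flux_constraint P \<phi> \<Phi>2 ell f (dgrad h)
              \<and> (\<forall>h'. flux_constraint P \<phi> \<Phi>2 ell f (dgrad h') \<longrightarrow>
                       (\<forall>(x, y)\<in>Zset P. dgrad h' x y = dgrad h x y))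
              \<and> ereal (L2norm P q \<phi> \<Phi>2 ell (dgrad h)) =
                  (INF G\<in>{G. flux_constraint P \<phi> \<Phi>2 ell f G}. ereal (L2norm P q \<phi> \<Phi>2 ell G))
              \<and> (\<forall>G. flux_constraint P \<phi> \<Phi>2 ell f G \<and>
                     ereal (L2norm P q \<phi> \<Phi>2 ell G) =
                       (INF G'\<in>{G. flux_constraint P \<phi> \<Phi>2 ell f G}. ereal (L2norm P q \<phi> \<Phi>2 ell G'))
                     \<longrightarrow> (\<forall>(x, y)\<in>Zset P. G x y = dgrad h x y))))"
proof -
  interpret Theta_weighted_chain P q \<phi> \<Phi>2 ell
    by unfold_locales (fact stoch irred inv detbal dphi pos_Phi2 ell_pos)+
  show ?thesis
  proof (cases "(\<Sum>x\<in>UNIV. q x * f x) = 0")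
    case True
    then obtain h where h: "flux_constraint P \<phi> \<Phi>2 ell f (dgrad h)"
      by (rule exists_gradient_flux)
    have inf: "(INF G\<in>{G. flux_constraint P \<phi> \<Phi>2 ell f G}. ereal (L2norm P q \<phi> \<Phi>2 ell G))
        = ereal (L2norm P q \<phi> \<Phi>2 ell (dgrad h))"
      using h by (rule INF_flux_L2norm)
    show ?thesis
      using True h inf Hm1norm_eq_L2norm_gradient[OF h]
        flux_gradient_unique[OF h] flux_minimizer_unique[OF h]
      by (intro conjI impI exI[of _ h]) auto
  next
    case False
    then have "{G. flux_constraint P \<phi> \<Phi>2 ell f G} = {}"
      using flux_constraint_imp_mean_0 by blast
    with False show ?thesis
      by (simp add: Hm1norm_eq_infinity top_ereal_def)
  qed
qed

end
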